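(* Let $K$ be a field, $A\subset K$ a finite set with $|A|=m$, $0\le p\le m$, and $X=\{x_1,\dots,x_{m-p}\}$ a set of indeterminates. Let $B\subset K$ be any finite set with $|B|\ge p$. Then in $K[X]$, $$\sum_{A'\subset A,\ |A'|=p}\mathcal{R}(A\setminus A',B)\frac{\mathcal{R}(X,A')}{\mathcal{R}(A\setminus A',A')}=\sum_{B'\subset B,\ |B'|=p}\mathcal{R}(A,B\setminus B')\frac{\mathcal{R}(X,B')}{\mathcal{R}(B',B\setminus B')}.$$
   Context: For finite sets $Y,Z$ of elements or indeterminates, $\mathcal{R}(Y,Z):=\prod_{y\in Y,z\in Z}(y-z)$, with $\mathcal{R}(Y,Z)=1$ if $Y$ or $Z$ is empty. *)

theory Defs
  imports Main "HOL-Library.Poly_Mapping"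
begin

text \<open>Multivariate polynomials over 'a in indeterminates x_0, x_1, ... :
  finitely supported maps from monomials (exponent vectors nat =>0 nat) to coefficients.\<close>
type_synonym 'a mpoly = "(nat \<Rightarrow>\<^sub>0 nat) \<Rightarrow>\<^sub>0 'a"

definition mvar :: "nat \<Rightarrow> 'a::{zero,one} mpoly" where
  "mvar i = Poly_Mapping.single (Poly_Mapping.single i 1) 1"

definition mconst :: "'a::zero \<Rightarrow> 'a mpoly" where
  "mconst c = Poly_Mapping.single 0 c"

definition Res :: "'b set \<Rightarrow> 'b set \<Rightarrow> 'b::comm_ring_1" where
  "Res Y Z = (\<Prod>y\<in>Y. \<Prod>z\<in>Z. (y - z))"

end

(*
  Call the left-hand side, with B replaced by a p-subset B' = {y_1, ..., y_p}, F(A; y_1, ..., y_p).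
  As a function of y_1 it is a polynomial of degree at most |X|. Setting y_1 = t for t in A kills
  every term with t in A - A' and leaves R(X, t) F(A - {t}; y_2, ..., y_p), so by induction on |A|
  it agrees with R(X, {y_1, ..., y_p}) at |A| > |X| points whose differences are units, hence
  identically; without any y the top coefficients are compared instead. This identity
  F(A; B') = R(X, B'), and its special case over K itself, sum over B' of
  R(A', B - B') / R(B', B - B') = 1, turn the left-hand side of the theorem into the right-hand
  side: insert the second identity, use R(A - A', B) R(A', B - B') = R(A, B - B') R(A - A', B'),
  swap the two sums and apply the first identity.
*)

theory Submission
  imports Defs "HOL-Computational_Algebra.Polynomial"
begin

text \<open>The second argument is a list because the induction below adds points one at a time,
  possibly repeating them.\<close>
definition Res_list :: "'a set \<Rightarrow> 'a list \<Rightarrow> 'a::comm_ring_1" where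
  "Res_list S ys = (\<Prod>s\<in>S. \<Prod>y\<leftarrow>ys. s - y)"

lemma Res_list_Nil [simp]: "Res_list S [] = 1"
  by (simp add: Res_list_def)

lemma Res_list_Cons: "Res_list S (c # ys) = (\<Prod>s\<in>S. s - c) * Res_list S ys"
  by (simp add: Res_list_def prod.distrib)

lemma Res_list_distinct: "distinct ys \<Longrightarrow> Res_list S ys = Res S (set ys)"
  by (simp add: Res_list_def Res_def prod.distinct_set_conv_list)

lemma Res_union_left:
  "finite Y1 \<Longrightarrow> finite Y2 \<Longrightarrow> Y1 \<inter> Y2 = {} \<Longrightarrow> Res (Y1 \<union> Y2) Z = Res Y1 Z * Res Y2 Z"
  unfolding Res_def by (rule prod.union_disjoint)

lemma Res_union_right:
  "finite Z1 \<Longrightarrow> finite Z2 \<Longrightarrow> Z1 \<inter> Z2 = {} \<Longrightarrow> Res Y (Z1 \<union> Z2) = Res Y Z1 * Res Y Z2"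
  unfolding Res_def by (simp add: prod.union_disjoint prod.distrib)

lemma Res_insert_right:
  "finite Z \<Longrightarrow> z \<notin> Z \<Longrightarrow> Res Y (insert z Z) = (\<Prod>y\<in>Y. y - z) * Res Y Z"
  unfolding Res_def by (simp add: prod.distrib)

lemma Res_diff_mult_Res:
  assumes "finite A" "finite B" "A' \<subseteq> A" "B' \<subseteq> B"
  shows "Res (A - A') B * Res A' (B - B') = Res A (B - B') * Res (A - A') B'"
proof -
  have "Res (A - A') B = Res (A - A') B' * Res (A - A') (B - B')"
    using Res_union_right[of B' "B - B'" "A - A'"] assms by (simp add: Un_absorb1 finite_subset)
  moreover have "Res A (B - B') = Res A' (B - B') * Res (A - A') (B - B')"
    using Res_union_left[of A' "A - A'" "B - B'"] assms by (simp add: Un_absorb1 finite_subset)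
  ultimately show ?thesis by (simp add: ac_simps)
qed

lemma finite_subsets_card: "finite T \<Longrightarrow> finite {S. S \<subseteq> T \<and> card S = k}"
  by (simp add: finite_Collect_conjI)

lemma poly_eq_0_if_roots_unit_diffs:
  fixes p :: "'r::comm_ring_1 poly"
  assumes "finite P" "degree p < card P" "\<And>a. a \<in> P \<Longrightarrow> poly p a = 0"
    and "\<And>a b. a \<in> P \<Longrightarrow> b \<in> P \<Longrightarrow> a \<noteq> b \<Longrightarrow> (a - b) dvd 1"
  shows "p = 0"
  using assms
proof (induction P arbitrary: p rule: finite_induct)
  case empty
  then show ?case by simp
next
  case (insert a P)
  define q where "q = synthetic_div p a"
  have p_eq: "p = [:-a, 1:] * q"
    using synthetic_div_correct'[of a p] insert.prems(2) by (simp add: q_def)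
  show ?case
  proof (cases "P = {}")
    case True
    with insert.prems(1) obtain c where "p = [:c:]" by (auto elim: degree_eq_zeroE)
    with insert.prems(2)[of a] show ?thesis by simp
  next
    case False
    have "card P > 0" using insert.hyps(1) False by (simp add: card_gt_0_iff)
    then have "degree q < card P"
      using insert.prems(1) insert.hyps by (simp add: q_def degree_synthetic_div)
    moreover have "poly q b = 0" if "b \<in> P" for b
    proof -
      have root: "(b - a) * poly q b = 0"
        using insert.prems(2)[of b] that by (simp add: p_eq algebra_simps)
      have "(b - a) dvd 1"
        using insert.prems(3)[of b a] insert.hyps(2) that by auto
      then obtain u where u: "1 = (b - a) * u" by (rule dvdE)
      have "poly q b = u * ((b - a) * poly q b)"
        by (simp flip: u mult.assoc add: mult.commute[of u])
      with root show ?thesis by simp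
    qed
    ultimately have "q = 0" using insert.IH insert.prems(3) by blast
    then show ?thesis by (simp add: p_eq)
  qed
qed

lemma degree_prod_linear_le: "degree (\<Prod>s\<in>S. [:f s, c:]) \<le> card S"
proof (cases "finite S")
  case True
  then have "degree (\<Prod>s\<in>S. [:f s, c:]) \<le> (\<Sum>s\<in>S. 1)"
    by (intro order_trans[OF degree_prod_sum_le] sum_mono) auto
  then show ?thesis by simp
qed simp

lemma coeff_prod_linear_card: "coeff (\<Prod>s\<in>S. [:f s, c:]) (card S) = c ^ card S"
proof (induction S rule: infinite_finite_induct)
  case (insert s S)
  have "coeff (\<Prod>s\<in>S. [:f s, c:]) (Suc (card S)) = 0"
    using degree_prod_linear_le[of f c S] by (simp add: coeff_eq_0)
  with insert show ?case by simp
qed simp_all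

locale field_ring_hom =
  fixes h :: "'a::field \<Rightarrow> 'r::comm_ring_1"
  assumes hom_add: "h (a + b) = h a + h b"
    and hom_mult: "h (a * b) = h a * h b"
    and hom_one: "h 1 = 1"
begin

lemma hom_zero: "h 0 = 0"
  using hom_add[of 0 0] by simp

lemma hom_diff: "h (a - b) = h a - h b"
  using hom_add[of "a - b" b] by (simp add: eq_diff_eq)

lemma hom_sum: "h (sum f A) = (\<Sum>x\<in>A. h (f x))"
  by (induction A rule: infinite_finite_induct) (simp_all add: hom_zero hom_add)

lemma hom_prod: "h (prod f A) = (\<Prod>x\<in>A. h (f x))"
  by (induction A rule: infinite_finite_induct) (simp_all add: hom_one hom_mult)

lemma hom_diff_dvd_1: "a \<noteq> b \<Longrightarrow> (h a - h b) dvd 1"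
proof -
  assume "a \<noteq> b"
  then have "(h a - h b) * h (1 / (a - b)) = 1" by (simp add: hom_one flip: hom_diff hom_mult)
  then show ?thesis by (rule dvdI[OF sym])
qed

lemma inj_hom: "inj h"
  by (rule injI) (use hom_diff_dvd_1 in fastforce)

text \<open>For \<open>h\<close> the inclusion \<open>K \<subseteq> K[X]\<close> and \<open>ys\<close> a listing of \<open>B'\<close>, \<open>interp_sum A X ys\<close>
  is the sum of \<open>R(A - A', B') R(X, A') / R(A - A', A')\<close>, indexed by the complements
  \<open>S = A - A'\<close> of size \<open>|X|\<close>.\<close>
definition interp_sum :: "'a set \<Rightarrow> 'r set \<Rightarrow> 'a list \<Rightarrow> 'r" where
  "interp_sum T X ys = (\<Sum>S | S \<subseteq> T \<and> card S = card X.
     h (Res_list S ys / Res S (T - S)) * Res X (h ` (T - S)))"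

definition interp_poly :: "'a set \<Rightarrow> 'r set \<Rightarrow> 'a list \<Rightarrow> 'r poly" where
  "interp_poly T X ys = (\<Sum>S | S \<subseteq> T \<and> card S = card X.
     smult (h (Res_list S ys / Res S (T - S)) * Res X (h ` (T - S))) (\<Prod>s\<in>S. [:h s, -1:]))"

lemma poly_interp_poly: "poly (interp_poly T X ys) (h c) = interp_sum T X (c # ys)"
  unfolding interp_poly_def interp_sum_def poly_sum
proof (intro sum.cong refl)
  fix S
  have "Res_list S (c # ys) / Res S (T - S) = Res_list S ys / Res S (T - S) * (\<Prod>s\<in>S. s - c)"
    by (simp add: Res_list_Cons)
  then have "h (Res_list S (c # ys) / Res S (T - S)) =
      h (Res_list S ys / Res S (T - S)) * (\<Prod>s\<in>S. h s - h c)"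
    by (simp only: hom_mult hom_prod hom_diff)
  then show "poly (smult (h (Res_list S ys / Res S (T - S)) * Res X (h ` (T - S)))
      (\<Prod>s\<in>S. [:h s, -1:])) (h c) =
    h (Res_list S (c # ys) / Res S (T - S)) * Res X (h ` (T - S))"
    by (simp add: poly_prod ac_simps)
qed

lemma degree_interp_poly: "finite T \<Longrightarrow> degree (interp_poly T X ys) \<le> card X"
  unfolding interp_poly_def
proof (intro degree_sum_le finite_subsets_card)
  fix S assume "S \<in> {S. S \<subseteq> T \<and> card S = card X}"
  then have "card S = card X" by simp
  moreover have "degree (smult (h (Res_list S ys / Res S (T - S)) * Res X (h ` (T - S)))
      (\<Prod>s\<in>S. [:h s, -1:])) \<le> card S"
    by (rule order_trans[OF degree_smult_le degree_prod_linear_le])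
  ultimately show "degree (smult (h (Res_list S ys / Res S (T - S)) * Res X (h ` (T - S)))
      (\<Prod>s\<in>S. [:h s, -1:])) \<le> card X" by simp
qed

lemma coeff_interp_poly:
  "finite T \<Longrightarrow> coeff (interp_poly T X ys) (card X) = interp_sum T X ys * (-1) ^ card X"
  unfolding interp_poly_def interp_sum_def coeff_sum sum_distrib_right
proof (intro sum.cong refl)
  fix S assume "finite T" "S \<in> {S. S \<subseteq> T \<and> card S = card X}"
  then have "card S = card X" by simp
  then show "coeff (smult (h (Res_list S ys / Res S (T - S)) * Res X (h ` (T - S)))
      (\<Prod>s\<in>S. [:h s, -1:])) (card X) =
    h (Res_list S ys / Res S (T - S)) * Res X (h ` (T - S)) * (-1) ^ card X"
    using coeff_prod_linear_card[of h "-1" S] by simp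
qed

lemma interp_sum_Cons_mem:
  assumes "finite T" "t \<in> T"
  shows "interp_sum T X (t # ys) = (\<Prod>x\<in>X. x - h t) * interp_sum (T - {t}) X ys"
proof -
  let ?g = "\<lambda>T ys S. h (Res_list S ys / Res S (T - S)) * Res X (h ` (T - S))"
  have "?g T (t # ys) S = (\<Prod>x\<in>X. x - h t) * ?g (T - {t}) ys S"
    if "S \<subseteq> T - {t}" for S
  proof -
    have S: "finite S" "t \<notin> S" using that assms(1) finite_subset by auto
    have T_S: "T - S = insert t (T - {t} - S)" using that assms(2) by auto
    have "(\<Prod>s\<in>S. s - t) \<noteq> 0" using S by simp
    moreover have "h t \<notin> h ` (T - {t} - S)" using inj_hom by (auto dest: injD)
    ultimately show ?thesis
      using assms(1) by (simp add: T_S Res_insert_right Res_list_Cons mult_ac)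
  qed
  moreover have "?g T (t # ys) S = 0" if "S \<subseteq> T" "t \<in> S" for S
  proof -
    have "finite S" using that(1) assms(1) by (rule finite_subset)
    with that(2) have "(\<Prod>s\<in>S. s - t) = 0" by auto
    then show ?thesis by (simp add: Res_list_Cons hom_zero)
  qed
  ultimately have "interp_sum T X (t # ys) =
      (\<Sum>S | S \<subseteq> T - {t} \<and> card S = card X. (\<Prod>x\<in>X. x - h t) * ?g (T - {t}) ys S)"
    unfolding interp_sum_def using assms(1)
    by (intro sum.mono_neutral_cong_right finite_subsets_card) auto
  then show ?thesis by (simp add: interp_sum_def sum_distrib_left)
qed

lemma interp_poly_eq_if_deletions:
  assumes "finite T" "card X < card T"
    and deletions: "\<And>t. t \<in> T \<Longrightarrow> interp_sum (T - {t}) X ys = Res_list X (map h ys)"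
  shows "interp_poly T X ys = smult (Res_list X (map h ys)) (\<Prod>x\<in>X. [:x, -1:])"
proof -
  let ?d = "interp_poly T X ys - smult (Res_list X (map h ys)) (\<Prod>x\<in>X. [:x, -1:])"
  have "?d = 0"
  proof (rule poly_eq_0_if_roots_unit_diffs)
    show "finite (h ` T)" using assms(1) by simp
    have "degree ?d \<le> card X"
      using degree_interp_poly[OF assms(1)] degree_prod_linear_le[of "\<lambda>x. x" "-1" X]
      by (intro degree_diff_le) (auto intro: order_trans[OF degree_smult_le])
    then show "degree ?d < card (h ` T)"
      using assms(2) card_image[OF inj_on_subset[OF inj_hom subset_UNIV]] by simp
    show "poly ?d a = 0" if "a \<in> h ` T" for a
    proof -
      obtain t where t: "t \<in> T" "a = h t" using \<open>a \<in> h ` T\<close> by blast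
      have "poly (interp_poly T X ys) (h t) = (\<Prod>x\<in>X. x - h t) * interp_sum (T - {t}) X ys"
        using assms(1) t(1) by (simp add: poly_interp_poly interp_sum_Cons_mem)
      then show ?thesis by (simp add: t(2) deletions[OF t(1)] poly_prod)
    qed
    show "(a - b) dvd 1" if ab: "a \<in> h ` T" "b \<in> h ` T" "a \<noteq> b" for a b
    proof -
      obtain x y where "a = h x" "b = h y" using ab(1,2) by blast
      with ab(3) show ?thesis by (auto intro: hom_diff_dvd_1)
    qed
  qed
  then show ?thesis by simp
qed

theorem interp_sum_eq_Res_list:
  assumes "finite T" "length ys + card X \<le> card T"
  shows "interp_sum T X ys = Res_list X (map h ys)"
  using assms
proof (induction "card T" arbitrary: T ys rule: less_induct)
  case less
  have poly_eq: "interp_poly T X ys' = smult (Res_list X (map h ys')) (\<Prod>x\<in>X. [:x, -1:])"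
    if "Suc (length ys') + card X \<le> card T" for ys'
    using less.prems(1) that
    by (intro interp_poly_eq_if_deletions less.hyps) (auto simp: card_Diff_singleton card_gt_0_iff)
  show ?case
  proof (cases ys)
    case (Cons c ys')
    then have "interp_sum T X ys = poly (interp_poly T X ys') (h c)"
      by (simp add: poly_interp_poly)
    also have "\<dots> = poly (smult (Res_list X (map h ys')) (\<Prod>x\<in>X. [:x, -1:])) (h c)"
      using poly_eq[of ys'] less.prems(2) Cons by simp
    also have "\<dots> = Res_list X (map h ys)"
      by (simp add: Cons poly_prod Res_list_Cons)
    finally show ?thesis .
  next
    case Nil
    consider "card X = card T" | "card X < card T" using less.prems(2) by linarith
    then show ?thesis
    proof cases
      case 1
      then have "{S. S \<subseteq> T \<and> card S = card X} = {T}"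
        using less.prems(1) card_subset_eq by auto
      then show ?thesis by (simp add: Nil interp_sum_def hom_one Res_def)
    next
      case 2
      then have "coeff (interp_poly T X []) (card X) = (-1) ^ card X"
        using poly_eq[of "[]"] coeff_prod_linear_card[of "\<lambda>x. x" "-1" X] by auto
      then have "interp_sum T X [] * (-1) ^ card X = (-1) ^ card X"
        using less.prems(1) by (simp add: coeff_interp_poly)
      then have "interp_sum T X [] * ((-1) ^ card X * (-1) ^ card X) = (-1) ^ card X * (-1) ^ card X"
        by (simp only: mult.assoc[symmetric])
      then show ?thesis using Nil by simp
    qed
  qed
qed

lemma sum_Res_complements:
  assumes "finite A" "finite C" "card X + card C = card A"
  shows "(\<Sum>A' | A' \<subseteq> A \<and> card A' = card C.
      h (Res (A - A') C / Res (A - A') A') * Res X (h ` A')) = Res X (h ` C)"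
proof -
  obtain cs where cs: "set cs = C" "distinct cs"
    using finite_distinct_list[OF assms(2)] by blast
  have "(\<Sum>A' | A' \<subseteq> A \<and> card A' = card C.
      h (Res (A - A') C / Res (A - A') A') * Res X (h ` A')) = interp_sum A X cs"
    unfolding interp_sum_def
  proof (rule sum.reindex_bij_witness[where i = "\<lambda>S. A - S" and j = "\<lambda>S. A - S"])
    fix A' assume "A' \<in> {A'. A' \<subseteq> A \<and> card A' = card C}"
    then show "A - (A - A') = A'" "A - A' \<in> {S. S \<subseteq> A \<and> card S = card X}"
      using assms by (auto simp: card_Diff_subset finite_subset)
    show "h (Res_list (A - A') cs / Res (A - A') (A - (A - A'))) * Res X (h ` (A - (A - A'))) =
        h (Res (A - A') C / Res (A - A') A') * Res X (h ` A')"
      using \<open>A - (A - A') = A'\<close> cs by (simp add: Res_list_distinct)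
  next
    fix S assume "S \<in> {S. S \<subseteq> A \<and> card S = card X}"
    then show "A - (A - S) = S" "A - S \<in> {A'. A' \<subseteq> A \<and> card A' = card C}"
      using assms by (auto simp: card_Diff_subset finite_subset)
  qed
  also have "\<dots> = Res_list X (map h cs)"
    using assms cs by (intro interp_sum_eq_Res_list) (auto simp: distinct_card)
  also have "\<dots> = Res X (h ` C)"
    using cs inj_hom by (simp add: Res_list_distinct distinct_map inj_on_subset)
  finally show ?thesis .
qed

end

lemma sum_Res_ratio_eq_1:
  fixes A' B :: "'a::field set"
  assumes "finite B" "card A' \<le> card B"
  shows "(\<Sum>B' | B' \<subseteq> B \<and> card B' = card A'. Res A' (B - B') / Res B' (B - B')) = 1"
proof -
  interpret field_ring_hom "\<lambda>x::'a. x" by unfold_locales auto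
  have "interp_sum B A' [] = 1"
    using interp_sum_eq_Res_list[of B "[]" A'] assms by simp
  then show ?thesis by (simp add: interp_sum_def)
qed

lemma Res_ratio_expand:
  fixes A B A' :: "'a::field set"
  assumes "finite A" "finite B" "A' \<subseteq> A" "card A' \<le> card B"
  shows "Res (A - A') B / Res (A - A') A' = (\<Sum>B' | B' \<subseteq> B \<and> card B' = card A'.
      Res A (B - B') / Res B' (B - B') * (Res (A - A') B' / Res (A - A') A'))"
proof -
  have "Res (A - A') B / Res (A - A') A' = Res (A - A') B / Res (A - A') A' *
      (\<Sum>B' | B' \<subseteq> B \<and> card B' = card A'. Res A' (B - B') / Res B' (B - B'))"
    using sum_Res_ratio_eq_1[OF assms(2,4)] by simp
  also have "\<dots> = (\<Sum>B' | B' \<subseteq> B \<and> card B' = card A'.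
      Res A (B - B') / Res B' (B - B') * (Res (A - A') B' / Res (A - A') A'))"
    unfolding sum_distrib_left
  proof (intro sum.cong refl)
    fix B' assume "B' \<in> {B'. B' \<subseteq> B \<and> card B' = card A'}"
    then have "Res (A - A') B * Res A' (B - B') = Res A (B - B') * Res (A - A') B'"
      using assms by (intro Res_diff_mult_Res) auto
    then show "Res (A - A') B / Res (A - A') A' * (Res A' (B - B') / Res B' (B - B')) =
        Res A (B - B') / Res B' (B - B') * (Res (A - A') B' / Res (A - A') A')"
      by (simp add: divide_simps)
  qed
  finally show ?thesis .
qed

lemma field_ring_hom_mconst: "field_ring_hom (mconst :: 'a::field \<Rightarrow> 'a mpoly)"
  by unfold_locales (simp_all add: mconst_def single_add mult_single)

lemma inj_mvar: "inj (mvar :: nat \<Rightarrow> 'a::field mpoly)"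
  unfolding mvar_def inj_def by (metis lookup_single_eq lookup_single_not_eq zero_neq_one)

theorem lemma3p1:
  fixes A B :: "'a::field set" and m p :: nat
  assumes "finite A" and "card A = m" and "p \<le> m"
    and "finite B" and "card B \<ge> p"
  shows "(\<Sum>A'\<in>{A'. A' \<subseteq> A \<and> card A' = p}.
            mconst (Res (A - A') B / Res (A - A') A')
            * Res (mvar ` {..<m - p}) (mconst ` A'))
       = (\<Sum>B'\<in>{B'. B' \<subseteq> B \<and> card B' = p}.
            mconst (Res A (B - B') / Res B' (B - B'))
            * Res (mvar ` {..<m - p}) (mconst ` B'))"
proof -
  interpret field_ring_hom mconst by (rule field_ring_hom_mconst)
  define X where "X = (mvar ` {..<m - p} :: 'a mpoly set)"
  let ?AA = "{A'. A' \<subseteq> A \<and> card A' = p}" and ?BB = "{B'. B' \<subseteq> B \<and> card B' = p}"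
  let ?c = "\<lambda>B'. Res A (B - B') / Res B' (B - B')"
  have card_X: "card X = m - p"
    unfolding X_def by (simp add: card_image inj_on_subset[OF inj_mvar])
  have "(\<Sum>A'\<in>?AA. mconst (Res (A - A') B / Res (A - A') A') * Res X (mconst ` A'))
      = (\<Sum>A'\<in>?AA. \<Sum>B'\<in>?BB. mconst (?c B') *
          (mconst (Res (A - A') B' / Res (A - A') A') * Res X (mconst ` A')))"
  proof (intro sum.cong refl)
    fix A' assume "A' \<in> ?AA"
    then have "Res (A - A') B / Res (A - A') A' =
        (\<Sum>B'\<in>?BB. ?c B' * (Res (A - A') B' / Res (A - A') A'))"
      using Res_ratio_expand[of A B A'] assms by auto
    then show "mconst (Res (A - A') B / Res (A - A') A') * Res X (mconst ` A') =
        (\<Sum>B'\<in>?BB. mconst (?c B') *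
          (mconst (Res (A - A') B' / Res (A - A') A') * Res X (mconst ` A')))"
      by (simp only: hom_sum hom_mult sum_distrib_right mult.assoc)
  qed
  also have "\<dots> = (\<Sum>B'\<in>?BB. mconst (?c B') *
      (\<Sum>A'\<in>?AA. mconst (Res (A - A') B' / Res (A - A') A') * Res X (mconst ` A')))"
    by (subst sum.swap) (simp add: sum_distrib_left)
  also have "\<dots> = (\<Sum>B'\<in>?BB. mconst (?c B') * Res X (mconst ` B'))"
    using assms card_X by (intro sum.cong refl)
      (auto simp: sum_Res_complements finite_subset)
  finally show ?thesis unfolding X_def .
qed

end
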